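(* Let $(\mathbf{w},\mathbf{u},q)$ be a sufficiently smooth solution of the GePUP-E formulation (described in the context) on $\Omega\times[t_0,\infty)$. Then $$\frac{\partial(\mathbf{n}\cdot\mathbf{w})}{\partial t}=-\lambda\,\mathbf{n}\cdot\mathbf{w}\quad\text{on }\partial\Omega,$$ and thus $\mathbf{n}\cdot\mathbf{w}(t)=e^{-\lambda(t-t_0)}\mathbf{n}\cdot\mathbf{w}(t_0)$ on $\partial\Omega$. In particular, if $\mathbf{n}\cdot\mathbf{w}(t_0)=0$ on $\partial\Omega$, then $\mathbf{n}\cdot\mathbf{w}(t)=0$ on $\partial\Omega$ for all $t>t_0$.
   Context: $\Omega\subset\mathbb{R}^D$ is a bounded connected open set with sufficiently smooth boundary, unit outward normal $\mathbf{n}$ and unit tangent vector(s) $\boldsymbol{\tau}$ on $\partial\Omega$. $\nu>0$ is the kinematic viscosity, $\mathbf{g}$ a given body force, $\lambda\ge 0$ a penalty parameter. The Leray–Helmholtz projection $\mathscr{P}$ maps a $C^1$ vector field $\mathbf{v}^*$ to $\mathbf{v}^*-\nabla\phi$ where $\Delta\phi=\nabla\cdot\mathbf{v}^*$ in $\Omega$ and $\mathbf{n}\cdot\nabla\phi=\mathbf{n}\cdot\mathbf{v}^*$ on $\partial\Omega$ (so $\mathscr{P}\mathbf{v}^*$ is divergence-free with zero normal component). The GePUP-E formulation is the system for $(\mathbf{w},\mathbf{u},q)$: $\partial_t\mathbf{w}=\mathbf{g}-\mathbf{u}\cdot\nabla\mathbf{u}-\nabla q+\nu\Delta\mathbf{w}$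 in $\Omega$; $\mathbf{w}\cdot\boldsymbol{\tau}=0$ and $\nabla\cdot\mathbf{w}=0$ on $\partial\Omega$; $\mathbf{u}=\mathscr{P}\mathbf{w}$ in $\Omega$, $\mathbf{u}\cdot\mathbf{n}=0$ on $\partial\Omega$; $\Delta q=\nabla\cdot(\mathbf{g}-\mathbf{u}\cdot\nabla\mathbf{u})$ in $\Omega$; $\mathbf{n}\cdot\nabla q=\mathbf{n}\cdot(\mathbf{g}-\mathbf{u}\cdot\nabla\mathbf{u}+\nu\Delta\mathbf{w})+\lambda\,\mathbf{n}\cdot\mathbf{w}$ on $\partial\Omega$; with initial condition $\mathbf{w}(\mathbf{x},t_0)=\mathbf{u}(\mathbf{x},t_0)$ for all $\mathbf{x}\in\overline{\Omega}$. *)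

theory Defs
  imports "HOL-Analysis.Analysis"
begin

definition C1_on :: "('a::real_normed_vector \<Rightarrow> 'b::real_normed_vector) \<Rightarrow> 'a set \<Rightarrow> bool" where
  "C1_on f U \<longleftrightarrow> (\<exists>f'. (\<forall>x\<in>U. (f has_derivative blinfun_apply (f' x)) (at x)) \<and> continuous_on U f')"

definition C2_on :: "('a::real_normed_vector \<Rightarrow> 'b::real_normed_vector) \<Rightarrow> 'a set \<Rightarrow> bool" where
  "C2_on f U \<longleftrightarrow> (\<exists>f'. (\<forall>x\<in>U. (f has_derivative blinfun_apply (f' x)) (at x)) \<and> C1_on f' U)"

definition partial :: "'n::finite \<Rightarrow> (real^'n \<Rightarrow> 'b::real_normed_vector) \<Rightarrow> real^'n \<Rightarrow> 'b" where
  "partial i f x = vector_derivative (\<lambda>s. f (x + s *\<^sub>R axis i 1)) (at 0)"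

definition grad :: "(real^'n::finite \<Rightarrow> real) \<Rightarrow> real^'n \<Rightarrow> real^'n" where
  "grad f x = (\<chi> i. partial i f x)"

definition divg :: "(real^'n::finite \<Rightarrow> real^'n) \<Rightarrow> real^'n \<Rightarrow> real" where
  "divg v x = (\<Sum>i\<in>UNIV. partial i (\<lambda>y. v y $ i) x)"

definition lap :: "(real^'n::finite \<Rightarrow> 'b::real_normed_vector) \<Rightarrow> real^'n \<Rightarrow> 'b" where
  "lap f x = (\<Sum>i\<in>UNIV. partial i (\<lambda>y. partial i f y) x)"

definition conv :: "(real^'n::finite \<Rightarrow> real^'n) \<Rightarrow> (real^'n \<Rightarrow> real^'n) \<Rightarrow> real^'n \<Rightarrow> real^'n" where
  "conv u v x = (\<Sum>i\<in>UNIV. (u x $ i) *\<^sub>R partial i v x)"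

definition dt :: "(real^'n::finite \<Rightarrow> real \<Rightarrow> 'b::real_normed_vector) \<Rightarrow> real^'n \<Rightarrow> real \<Rightarrow> 'b" where
  "dt w x t = vector_derivative (\<lambda>s. w x s) (at t)"

definition outward_unit_normal :: "(real^'n::finite) set \<Rightarrow> (real^'n \<Rightarrow> real^'n) \<Rightarrow> bool" where
  "outward_unit_normal \<Omega> nrm \<longleftrightarrow>
     (\<forall>p\<in>frontier \<Omega>. \<exists>V \<phi>. open V \<and> p \<in> V \<and> C2_on \<phi> V \<and>
        (\<forall>x\<in>V. x \<in> \<Omega> \<longleftrightarrow> \<phi> x < 0) \<and> grad \<phi> p \<noteq> 0 \<and>
        nrm p = (1 / norm (grad \<phi> p)) *\<^sub>R grad \<phi> p)"

end

theory Submission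
  imports Defs
begin

(* The Neumann condition imposed on q is exactly the normal component of the momentum
   equation, up to the penalty term lam n.w. Since all fields are C^2 up to the boundary,
   the momentum equation persists on the closure of the domain by continuity; dotting it with
   n at a boundary point and subtracting the Neumann condition leaves d/dt (n.w) = -lam n.w,
   a scalar linear ODE in t at each boundary point. *)

lemma has_vector_derivative_along_line:
  fixes F :: "'a::real_normed_vector \<Rightarrow> 'b::real_normed_vector"
  assumes "(F has_derivative F') (at (z + s0 *\<^sub>R v))"
  shows "((\<lambda>s. F (z + s *\<^sub>R v)) has_vector_derivative F' v) (at s0)"
proof -
  have "((\<lambda>s. z + s *\<^sub>R v) has_derivative (\<lambda>s. s *\<^sub>R v)) (at s0)"
    by (auto intro!: derivative_eq_intros)
  from has_derivative_compose[OF this assms]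
  have "((\<lambda>s. F (z + s *\<^sub>R v)) has_derivative (\<lambda>s. F' (s *\<^sub>R v))) (at s0)" .
  moreover have "F' (s *\<^sub>R v) = s *\<^sub>R F' v" for s
    using assms by (simp add: has_derivative_linear linear_cmul)
  ultimately show ?thesis
    by (simp add: has_vector_derivative_def)
qed

lemma partial_eq_derivative:
  fixes f :: "real^'n::finite \<Rightarrow> real \<Rightarrow> 'b::real_normed_vector"
  assumes "((\<lambda>(x,t). f x t) has_derivative F') (at (x,t))"
  shows "partial i (\<lambda>y. f y t) x = F' (axis i 1, 0)"
proof -
  have "((\<lambda>s. f (x + s *\<^sub>R axis i 1) t) has_vector_derivative F' (axis i 1, 0)) (at 0)"
    using has_vector_derivative_along_line[of "\<lambda>(x,t). f x t" F' "(x,t)" 0 "(axis i 1, 0)"] assms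
    by simp
  then show ?thesis
    unfolding partial_def by (rule vector_derivative_at)
qed

lemma dt_eq_derivative:
  fixes f :: "real^'n::finite \<Rightarrow> real \<Rightarrow> 'b::real_normed_vector"
  assumes "((\<lambda>(x,t). f x t) has_derivative F') (at (x,t))"
  shows "dt f x t = F' (0, 1)"
proof -
  have "((\<lambda>s. f x s) has_vector_derivative F' (0, 1)) (at t)"
    using has_vector_derivative_along_line[of "\<lambda>(x,t). f x t" F' "(x,0)" t "(0,1)"] assms
    by simp
  then show ?thesis
    unfolding dt_def by (rule vector_derivative_at)
qed

lemma has_real_derivative_inner_dt:
  fixes f :: "real^'n::finite \<Rightarrow> real \<Rightarrow> 'b::real_inner"
  assumes "((\<lambda>(x,t). f x t) has_derivative F') (at (x,t))"
  shows "((\<lambda>s. a \<bullet> f x s) has_real_derivative a \<bullet> dt f x t) (at t)"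
proof -
  have "((\<lambda>s. f x s) has_vector_derivative dt f x t) (at t)"
    using has_vector_derivative_along_line[of "\<lambda>(x,t). f x t" F' "(x,0)" t "(0,1)"] assms
    by (simp add: dt_eq_derivative)
  then have "((\<lambda>s. a \<bullet> f x s) has_vector_derivative a \<bullet> dt f x t) (at t)"
    by (rule bounded_linear_inner_right[THEN bounded_linear.has_vector_derivative])
  then show ?thesis
    by (simp add: has_real_derivative_iff_has_vector_derivative)
qed

lemma second_partial_eq_derivative:
  fixes f :: "real^'n::finite \<Rightarrow> real \<Rightarrow> 'b::real_normed_vector"
  assumes "open U" "(x,t) \<in> U"
    and Df: "\<And>z. z \<in> U \<Longrightarrow> ((\<lambda>(x,t). f x t) has_derivative blinfun_apply (Df z)) (at z)"
    and D2f: "(Df has_derivative blinfun_apply D2f) (at (x,t))"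
  shows "partial i (\<lambda>y. partial i (\<lambda>y. f y t) y) x = D2f (axis i 1, 0) (axis i 1, 0)"
proof -
  let ?e = "axis i 1 :: real^'n"
  define S where "S = (\<lambda>s. (x + s *\<^sub>R ?e, t)) -` U"
  have "open S"
    unfolding S_def by (rule continuous_open_vimage[OF \<open>open U\<close>]) (intro continuous_intros)
  have "0 \<in> S"
    using assms(2) by (simp add: S_def)
  have "((\<lambda>s. Df (x + s *\<^sub>R ?e, t)) has_vector_derivative D2f (?e, 0)) (at 0)"
    using has_vector_derivative_along_line[of Df D2f "(x,t)" 0 "(?e, 0)"] D2f by simp
  then have "((\<lambda>s. Df (x + s *\<^sub>R ?e, t) (?e, 0)) has_vector_derivative D2f (?e, 0) (?e, 0)) (at 0)"
    by (rule blinfun.bounded_linear_left[THEN bounded_linear.has_vector_derivative])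
  then have "((\<lambda>s. partial i (\<lambda>y. f y t) (x + s *\<^sub>R ?e))
      has_vector_derivative D2f (?e, 0) (?e, 0)) (at 0)"
    by (rule has_vector_derivative_transform_within_open[OF _ \<open>open S\<close> \<open>0 \<in> S\<close>])
       (simp add: S_def partial_eq_derivative[OF Df])
  then show ?thesis
    unfolding partial_def[of i "partial i (\<lambda>y. f y t)"] by (rule vector_derivative_at)
qed

lemma C1_on_imp_continuous_on: "C1_on f U \<Longrightarrow> continuous_on U f"
  unfolding C1_on_def
  by (meson continuous_at_imp_continuous_on has_derivative_continuous)

lemma C2_on_imp_C1_on: "C2_on f U \<Longrightarrow> C1_on f U"
  unfolding C2_on_def C1_on_def[of f] using C1_on_imp_continuous_on by blast

lemma continuous_on_slice:
  "continuous_on U F \<Longrightarrow> continuous_on ((\<lambda>y. (y, t)) -` U) (\<lambda>y. F (y, t))"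
  by (rule continuous_on_compose2[of U F])
     (auto intro!: continuous_on_Pair continuous_on_id continuous_on_const)

lemma continuous_on_partial_slice:
  fixes f :: "real^'n::finite \<Rightarrow> real \<Rightarrow> 'b::real_normed_vector"
  assumes "C1_on (\<lambda>(x,t). f x t) U"
  shows "continuous_on ((\<lambda>y. (y, t)) -` U) (partial i (\<lambda>y. f y t))"
proof -
  obtain Df where Df: "\<And>z. z \<in> U \<Longrightarrow> ((\<lambda>(x,t). f x t) has_derivative blinfun_apply (Df z)) (at z)"
    and "continuous_on U Df"
    using assms unfolding C1_on_def by blast
  have "continuous_on ((\<lambda>y. (y, t)) -` U) (\<lambda>y. Df (y, t) (axis i 1, 0))"
    using continuous_on_slice[OF \<open>continuous_on U Df\<close>] by (intro continuous_intros)
  then show ?thesis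
    by (rule continuous_on_eq) (simp add: partial_eq_derivative[OF Df])
qed

lemma continuous_on_dt_slice:
  fixes f :: "real^'n::finite \<Rightarrow> real \<Rightarrow> 'b::real_normed_vector"
  assumes "C1_on (\<lambda>(x,t). f x t) U"
  shows "continuous_on ((\<lambda>y. (y, t)) -` U) (\<lambda>y. dt f y t)"
proof -
  obtain Df where Df: "\<And>z. z \<in> U \<Longrightarrow> ((\<lambda>(x,t). f x t) has_derivative blinfun_apply (Df z)) (at z)"
    and "continuous_on U Df"
    using assms unfolding C1_on_def by blast
  have "continuous_on ((\<lambda>y. (y, t)) -` U) (\<lambda>y. Df (y, t) (0, 1))"
    using continuous_on_slice[OF \<open>continuous_on U Df\<close>] by (intro continuous_intros)
  then show ?thesis
    by (rule continuous_on_eq) (simp add: dt_eq_derivative[OF Df])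
qed

lemma continuous_on_second_partial_slice:
  fixes f :: "real^'n::finite \<Rightarrow> real \<Rightarrow> 'b::real_normed_vector"
  assumes "open U" "C2_on (\<lambda>(x,t). f x t) U"
  shows "continuous_on ((\<lambda>y. (y, t)) -` U) (partial i (\<lambda>y. partial i (\<lambda>y. f y t) y))"
proof -
  obtain Df D2f where Df: "\<And>z. z \<in> U \<Longrightarrow> ((\<lambda>(x,t). f x t) has_derivative blinfun_apply (Df z)) (at z)"
    and D2f: "\<And>z. z \<in> U \<Longrightarrow> (Df has_derivative blinfun_apply (D2f z)) (at z)"
    and "continuous_on U D2f"
    using assms(2) unfolding C2_on_def C1_on_def by blast
  have "continuous_on ((\<lambda>y. (y, t)) -` U) (\<lambda>y. D2f (y, t) (axis i 1, 0) (axis i 1, 0))"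
    by (rule blinfun.continuous_on[OF blinfun.continuous_on continuous_on_const]
        continuous_on_slice[OF \<open>continuous_on U D2f\<close>] continuous_on_const)+
  then show ?thesis
  proof (rule continuous_on_eq)
    fix y assume "y \<in> (\<lambda>y. (y, t)) -` U"
    then show "D2f (y, t) (axis i 1, 0) (axis i 1, 0) = partial i (partial i (\<lambda>y. f y t)) y"
      using second_partial_eq_derivative[OF \<open>open U\<close> _ Df D2f, of y t] by simp
  qed
qed

lemma linear_ode_solution_exp:
  fixes f :: "real \<Rightarrow> real"
  assumes deriv: "\<And>s. s \<ge> t0 \<Longrightarrow> (f has_real_derivative (- lam * f s)) (at s)"
    and "t \<ge> t0"
  shows "f t = exp (- lam * (t - t0)) * f t0"
proof -
  define h where "h s = exp (lam * (s - t0)) * f s" for s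
  have "(h has_real_derivative 0) (at s within {t0..})" if "s \<in> {t0..}" for s
  proof -
    have "(h has_real_derivative
        lam * exp (lam * (s - t0)) * f s + exp (lam * (s - t0)) * (- lam * f s)) (at s)"
      unfolding h_def using deriv that by (auto intro!: derivative_eq_intros)
    then show ?thesis
      by (simp add: algebra_simps has_field_derivative_at_within)
  qed
  then obtain c where "\<forall>s\<in>{t0..}. h s = c"
    using has_field_derivative_zero_constant[of "{t0..}" h] by auto
  then have "h t = h t0"
    using \<open>t \<ge> t0\<close> by simp
  then have "exp (- lam * (t - t0)) * f t0 = exp (- lam * (t - t0)) * exp (lam * (t - t0)) * f t"
    by (simp add: h_def)
  also have "\<dots> = f t"
    by (simp flip: exp_add)
  finally show ?thesis ..
qed

lemma momentum_on_closure:
  fixes \<Omega> :: "(real^'n::finite) set"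
    and w u g :: "real^'n \<Rightarrow> real \<Rightarrow> real^'n"
    and q :: "real^'n \<Rightarrow> real \<Rightarrow> real"
  assumes U: "open U" "closure \<Omega> \<times> {t0..} \<subseteq> U"
    and smooth: "C2_on (\<lambda>(x,t). w x t) U" "C2_on (\<lambda>(x,t). u x t) U"
                "C2_on (\<lambda>(x,t). q x t) U" "C2_on (\<lambda>(x,t). g x t) U"
    and momentum: "\<And>x t. x \<in> \<Omega> \<Longrightarrow> t \<ge> t0 \<Longrightarrow>
        dt w x t = g x t - conv (\<lambda>y. u y t) (\<lambda>y. u y t) x - grad (\<lambda>y. q y t) x
                   + \<nu> *\<^sub>R lap (\<lambda>y. w y t) x"
    and "p \<in> closure \<Omega>" "t \<ge> t0"
  shows "dt w p t = g p t - conv (\<lambda>y. u y t) (\<lambda>y. u y t) p - grad (\<lambda>y. q y t) p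
                   + \<nu> *\<^sub>R lap (\<lambda>y. w y t) p"
proof -
  let ?V = "(\<lambda>y. (y, t)) -` U"
  have C1: "C1_on (\<lambda>(x,t). w x t) U" "C1_on (\<lambda>(x,t). u x t) U"
      "C1_on (\<lambda>(x,t). q x t) U" "C1_on (\<lambda>(x,t). g x t) U"
    using smooth by (simp_all add: C2_on_imp_C1_on)
  have "continuous_on ?V (\<lambda>y. u y t)" "continuous_on ?V (\<lambda>y. g y t)"
    using C1(2,4)[THEN C1_on_imp_continuous_on, THEN continuous_on_slice] by simp_all
  then have "continuous_on ?V (\<lambda>y. dt w y t - (g y t - conv (\<lambda>y. u y t) (\<lambda>y. u y t) y
      - grad (\<lambda>y. q y t) y + \<nu> *\<^sub>R lap (\<lambda>y. w y t) y))" (is "continuous_on _ ?residual")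
    unfolding conv_def grad_def lap_def
    by (intro continuous_intros continuous_on_dt_slice[OF C1(1)]
        continuous_on_partial_slice[OF C1(2)] continuous_on_partial_slice[OF C1(3)]
        continuous_on_second_partial_slice[OF U(1) smooth(1)])
  moreover have "closure \<Omega> \<subseteq> ?V"
    using U(2) \<open>t \<ge> t0\<close> by auto
  ultimately have "continuous_on (closure \<Omega>) ?residual"
    by (rule continuous_on_subset)
  then have "?residual p = 0"
    by (rule continuous_constant_on_closure) (simp_all add: momentum \<open>p \<in> closure \<Omega>\<close> \<open>t \<ge> t0\<close>)
  then show ?thesis
    by simp
qed

theorem lemma5:
  fixes \<Omega> :: "(real^'n::finite) set"
    and nrm :: "real^'n \<Rightarrow> real^'n"
    and w u g :: "real^'n \<Rightarrow> real \<Rightarrow> real^'n"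
    and q :: "real^'n \<Rightarrow> real \<Rightarrow> real"
    and \<nu> lam t0 :: real
    and U :: "((real^'n) \<times> real) set"
  assumes dom: "open \<Omega>" "bounded \<Omega>" "connected \<Omega>" "\<Omega> \<noteq> {}"
    and normal: "outward_unit_normal \<Omega> nrm"
    and visc: "\<nu> > 0" and pen: "lam \<ge> 0"
    and U: "open U" "closure \<Omega> \<times> {t0..} \<subseteq> U"
    and smooth: "C2_on (\<lambda>(x,t). w x t) U" "C2_on (\<lambda>(x,t). u x t) U"
                "C2_on (\<lambda>(x,t). q x t) U" "C2_on (\<lambda>(x,t). g x t) U"
    and momentum: "\<And>x t. x \<in> \<Omega> \<Longrightarrow> t \<ge> t0 \<Longrightarrow>
        dt w x t = g x t - conv (\<lambda>y. u y t) (\<lambda>y. u y t) x - grad (\<lambda>y. q y t) x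
                   + \<nu> *\<^sub>R lap (\<lambda>y. w y t) x"
    and w_tangential: "\<And>p t \<tau>. p \<in> frontier \<Omega> \<Longrightarrow> t \<ge> t0 \<Longrightarrow>
        norm \<tau> = 1 \<Longrightarrow> \<tau> \<bullet> nrm p = 0 \<Longrightarrow> w p t \<bullet> \<tau> = 0"
    and w_div_bdry: "\<And>p t. p \<in> frontier \<Omega> \<Longrightarrow> t \<ge> t0 \<Longrightarrow> divg (\<lambda>y. w y t) p = 0"
    and projection: "\<And>t. t \<ge> t0 \<Longrightarrow> \<exists>\<phi> V. open V \<and> closure \<Omega> \<subseteq> V \<and> C2_on \<phi> V \<and>
        (\<forall>x\<in>\<Omega>. lap \<phi> x = divg (\<lambda>y. w y t) x) \<and>
        (\<forall>p\<in>frontier \<Omega>. nrm p \<bullet> grad \<phi> p = nrm p \<bullet> w p t) \<and>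
        (\<forall>x\<in>\<Omega>. u x t = w x t - grad \<phi> x)"
    and u_bdry: "\<And>p t. p \<in> frontier \<Omega> \<Longrightarrow> t \<ge> t0 \<Longrightarrow> u p t \<bullet> nrm p = 0"
    and pressure: "\<And>x t. x \<in> \<Omega> \<Longrightarrow> t \<ge> t0 \<Longrightarrow>
        lap (\<lambda>y. q y t) x = divg (\<lambda>y. g y t - conv (\<lambda>z. u z t) (\<lambda>z. u z t) y) x"
    and pressure_bdry: "\<And>p t. p \<in> frontier \<Omega> \<Longrightarrow> t \<ge> t0 \<Longrightarrow>
        nrm p \<bullet> grad (\<lambda>y. q y t) p =
          nrm p \<bullet> (g p t - conv (\<lambda>y. u y t) (\<lambda>y. u y t) p + \<nu> *\<^sub>R lap (\<lambda>y. w y t) p)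
          + lam * (nrm p \<bullet> w p t)"
    and init: "\<And>x. x \<in> closure \<Omega> \<Longrightarrow> w x t0 = u x t0"
  shows "(\<forall>p\<in>frontier \<Omega>. \<forall>t\<ge>t0.
            ((\<lambda>s. nrm p \<bullet> w p s) has_real_derivative (- lam * (nrm p \<bullet> w p t))) (at t))
       \<and> (\<forall>p\<in>frontier \<Omega>. \<forall>t\<ge>t0. nrm p \<bullet> w p t = exp (- lam * (t - t0)) * (nrm p \<bullet> w p t0))
       \<and> ((\<forall>p\<in>frontier \<Omega>. nrm p \<bullet> w p t0 = 0) \<longrightarrow>
            (\<forall>p\<in>frontier \<Omega>. \<forall>t>t0. nrm p \<bullet> w p t = 0))"
proof -
  have normal_dt: "nrm p \<bullet> dt w p t = - lam * (nrm p \<bullet> w p t)"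
    if "p \<in> frontier \<Omega>" "t \<ge> t0" for p t
  proof -
    have "p \<in> closure \<Omega>"
      using that(1) by (simp add: frontier_def)
    with momentum_on_closure[OF U smooth momentum] pressure_bdry[OF that] that(2) show ?thesis
      by (simp add: inner_diff_right inner_add_right)
  qed
  have deriv: "((\<lambda>s. nrm p \<bullet> w p s) has_real_derivative - lam * (nrm p \<bullet> w p t)) (at t)"
    if "p \<in> frontier \<Omega>" "t \<ge> t0" for p t
  proof -
    have "(p, t) \<in> U"
      using U(2) that by (auto simp: frontier_def)
    then obtain Dw where "((\<lambda>(x,t). w x t) has_derivative blinfun_apply Dw) (at (p,t))"
      using smooth(1) unfolding C2_on_def by blast
    then show ?thesis
      using has_real_derivative_inner_dt normal_dt[OF that] by metis
  qed
  have solution: "nrm p \<bullet> w p t = exp (- lam * (t - t0)) * (nrm p \<bullet> w p t0)"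
    if "p \<in> frontier \<Omega>" "t \<ge> t0" for p t
    using linear_ode_solution_exp[where f = "\<lambda>s. nrm p \<bullet> w p s", OF deriv[OF that(1)] that(2)]
    by simp
  have vanishing: "nrm p \<bullet> w p t = 0"
    if "\<forall>p\<in>frontier \<Omega>. nrm p \<bullet> w p t0 = 0" "p \<in> frontier \<Omega>" "t > t0" for p t
    using solution[of p t] that by simp
  show ?thesis
    using deriv solution vanishing by blast
qed

end
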